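(* Assume $\|\nabla f_t(x)\|_\infty\le G_\infty$ for all $t\in[n]$, $x\in\mathcal D$, where $\min\{G,G_\infty,B\}\ge1$ and $\alpha>0$. Let $\phi=\sqrt{70(8G^2B^2\alpha+G^2B^2+1/\alpha)}$, $C_n>0$, and assume $\lambda\ge d^{1.5}\phi\,n^{1/3}/C_n^{1/3}$. Let $[i_s,i_t]\in\mathcal P$ be a bin of the key partition such that, across some coordinate $k\in[d]$, the offline optimal takes the form of Structure 1 or Structure 2 on some sub-interval of $[i_s,i_t]$. Let $$\mu_{\mathrm{th}}=\sqrt{\frac{140d^{1.5}(8G^2B^2\alpha+G^2B^2+1/\alpha)G_\infty C_n^{1/3}\log n}{G^2\phi\,n^{1/3}}}.$$ If $C_n\le\left(\frac{B^2G^2\phi}{560d^{1.5}(8G^2B^2\alpha+G^2B^2+1/\alpha)G_\infty\log n}\right)^3n$, then $\mathrm{GAP}_{\min}(-B,[i_s,i_t])[k]\vee\mathrm{GAP}_{\min}(B,[i_s,i_t])[k]\ge\mu_{\mathrm{th}}$.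
   Context: $\mathcal D=\{x\in\mathbb R^d:\|x\|_\infty\le B\}$; $[a,b]=\{a,\dots,b\}$; $a\vee b=\max\{a,b\}$; $G>0$; $f_1,\dots,f_n$ are differentiable convex functions on $\mathcal D$ (the surrogate losses $f_t(x)=(\sqrt{\alpha/2}\nabla\ell_t(x_t)^T(x-x_t)+1/\sqrt{2\alpha})^2$). Offline optimal: given $C_n>0$, $u_1,\dots,u_n\in\mathbb R^d$ is an optimal solution of: minimize $\sum_{t=1}^nf_t(\tilde u_t)$ subject to $\sum_{t=2}^n\|\tilde u_t-\tilde u_{t-1}\|_1\le C_n$ and $\|\tilde u_t\|_\infty\le B$; $\lambda\ge0$ and $\gamma^\pm_t\in\mathbb R^d_{\ge0}$ are optimal dual variables satisfying: there are $s_t\in[-1,1]^d$ with $s_t[k]=\mathrm{sign}(u_{t+1}[k]-u_t[k])$ whenever nonzero, $s_0=s_n=0$, $\nabla f_t(u_t)=\lambda(s_t-s_{t-1})+\gamma^-_t-\gamma^+_t$, $\lambda(\sum_{t=2}^n\|u_t-u_{t-1}\|_1-C_n)=0$, $\gamma^-_t[k](u_t[k]+B)=0$, $\gamma^+_t[k](u_t[k]-B)=0$. Structure 1 across coordinate $k$ on $[a,b]\subseteq\{2,\dots,n-1\}$: $u_j[k]=u_a[k]\in(-B,B)$ for all $j\in[a,b]$, $u_b[k]>u_{b+1}[k]$ and $u_a[k]>u_{a-1}[k]$. Structure 2: same but with $u_b[k]<u_{b+1}[k]$ and $u_a[k]<u_{a-1}[k]$. $\mathrm{GAP}_{\min}(\beta,[a,b])[k]=\min_{j\in[a,b]}|u_j[k]-\beta|$.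 Key partition $\mathcal P$: $[n]$ is partitioned greedily into consecutive bins: the first bin starts at $i_s=1$; a bin starting at $i_s$ ends at the largest $i_t\in[i_s,n]$ with $\sum_{j=i_s+1}^{i_t}\|u_j-u_{j-1}\|_1\le B/\sqrt{i_t-i_s+1}$; the next bin starts at $i_t+1$, until $n$ is covered. *)

theory Defs
  imports "HOL-Analysis.Analysis"
begin

text \<open>Vectors in R^d are rendered as real^'d for a finite index type 'd, so d = CARD('d).
  Time indices are natural numbers; only t in {1..n} matter.\<close>

definition l1norm :: "real^'d \<Rightarrow> real" where
  "l1norm x = (\<Sum>k\<in>UNIV. \<bar>x $ k\<bar>)"

definition box_D :: "real \<Rightarrow> (real^'d) set" where
  "box_D B = {x. \<forall>k. \<bar>x $ k\<bar> \<le> B}"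

text \<open>Surrogate loss f_t(x) = (sqrt(alpha/2) g^T (x - x_t) + 1/sqrt(2 alpha))^2,
  where g = grad l_t(x_t).\<close>
definition surrogate :: "real \<Rightarrow> real^'d \<Rightarrow> real^'d \<Rightarrow> real^'d \<Rightarrow> real" where
  "surrogate \<alpha> g xt x = (sqrt (\<alpha>/2) * (g \<bullet> (x - xt)) + 1 / sqrt (2*\<alpha>))^2"

definition path_len :: "(nat \<Rightarrow> real^'d) \<Rightarrow> nat \<Rightarrow> nat \<Rightarrow> real" where
  "path_len u a b = (\<Sum>j\<in>{a+1..b}. l1norm (u j - u (j-1)))"

definition feasible :: "nat \<Rightarrow> real \<Rightarrow> real \<Rightarrow> (nat \<Rightarrow> real^'d) \<Rightarrow> bool" where
  "feasible n B Cn v \<longleftrightarrow> path_len v 1 n \<le> Cn \<and> (\<forall>t\<in>{1..n}. v t \<in> box_D B)"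

definition offline_optimal ::
  "(nat \<Rightarrow> real^'d \<Rightarrow> real) \<Rightarrow> nat \<Rightarrow> real \<Rightarrow> real \<Rightarrow> (nat \<Rightarrow> real^'d) \<Rightarrow> bool" where
  "offline_optimal f n B Cn u \<longleftrightarrow> feasible n B Cn u \<and>
     (\<forall>v. feasible n B Cn v \<longrightarrow> (\<Sum>t=1..n. f t (u t)) \<le> (\<Sum>t=1..n. f t (v t)))"

definition kkt_dual ::
  "(nat \<Rightarrow> real^'d \<Rightarrow> real^'d) \<Rightarrow> nat \<Rightarrow> real \<Rightarrow> real \<Rightarrow> (nat \<Rightarrow> real^'d) \<Rightarrow> real
     \<Rightarrow> (nat \<Rightarrow> real^'d) \<Rightarrow> (nat \<Rightarrow> real^'d) \<Rightarrow> bool" where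
  "kkt_dual gradf n B Cn u lam \<gamma>m \<gamma>p \<longleftrightarrow>
     lam \<ge> 0 \<and> (\<forall>t\<in>{1..n}. \<forall>k. \<gamma>m t $ k \<ge> 0 \<and> \<gamma>p t $ k \<ge> 0) \<and>
     (\<exists>s :: nat \<Rightarrow> real^'d.
        (\<forall>t\<in>{0..n}. \<forall>k. -1 \<le> s t $ k \<and> s t $ k \<le> 1) \<and>
        (\<forall>t\<in>{1..<n}. \<forall>k. u (t+1) $ k - u t $ k \<noteq> 0 \<longrightarrow>
              s t $ k = sgn (u (t+1) $ k - u t $ k)) \<and>
        s 0 = 0 \<and> s n = 0 \<and>
        (\<forall>t\<in>{1..n}. gradf t (u t) = lam *\<^sub>R (s t - s (t-1)) + \<gamma>m t - \<gamma>p t)) \<and>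
     lam * (path_len u 1 n - Cn) = 0 \<and>
     (\<forall>t\<in>{1..n}. \<forall>k. \<gamma>m t $ k * (u t $ k + B) = 0 \<and> \<gamma>p t $ k * (u t $ k - B) = 0)"

definition bin_end :: "real \<Rightarrow> (nat \<Rightarrow> real^'d) \<Rightarrow> nat \<Rightarrow> nat \<Rightarrow> nat" where
  "bin_end B u n i0 = (GREATEST i1. i0 \<le> i1 \<and> i1 \<le> n \<and>
      path_len u i0 i1 \<le> B / sqrt (real (i1 - i0 + 1)))"

inductive key_bin :: "real \<Rightarrow> (nat \<Rightarrow> real^'d) \<Rightarrow> nat \<Rightarrow> nat \<Rightarrow> nat \<Rightarrow> bool"
  for B u n where
  first: "1 \<le> n \<Longrightarrow> key_bin B u n 1 (bin_end B u n 1)"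
| step: "key_bin B u n a b \<Longrightarrow> b < n \<Longrightarrow> key_bin B u n (b+1) (bin_end B u n (b+1))"

definition structure1 :: "nat \<Rightarrow> real \<Rightarrow> (nat \<Rightarrow> real^'d) \<Rightarrow> 'd \<Rightarrow> nat \<Rightarrow> nat \<Rightarrow> bool" where
  "structure1 n B u k a b \<longleftrightarrow> 2 \<le> a \<and> a \<le> b \<and> b \<le> n - 1 \<and>
     (\<forall>j\<in>{a..b}. u j $ k = u a $ k) \<and> -B < u a $ k \<and> u a $ k < B \<and>
     u b $ k > u (b+1) $ k \<and> u a $ k > u (a-1) $ k"

definition structure2 :: "nat \<Rightarrow> real \<Rightarrow> (nat \<Rightarrow> real^'d) \<Rightarrow> 'd \<Rightarrow> nat \<Rightarrow> nat \<Rightarrow> bool" where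
  "structure2 n B u k a b \<longleftrightarrow> 2 \<le> a \<and> a \<le> b \<and> b \<le> n - 1 \<and>
     (\<forall>j\<in>{a..b}. u j $ k = u a $ k) \<and> -B < u a $ k \<and> u a $ k < B \<and>
     u b $ k < u (b+1) $ k \<and> u a $ k < u (a-1) $ k"

definition gap_min :: "(nat \<Rightarrow> real^'d) \<Rightarrow> real \<Rightarrow> nat \<Rightarrow> nat \<Rightarrow> 'd \<Rightarrow> real" where
  "gap_min u \<beta> a b k = Min ((\<lambda>j. \<bar>u j $ k - \<beta>\<bar>) ` {a..b})"

end

theory Submission
  imports Defs
begin

text \<open>The smallness assumption on \<open>C\<^sub>n\<close> is strong enough to give both \<open>\<lambda> \<ge> 2 G\<^sub>\<infinity>\<close> and
  \<open>\<mu>\<^sub>t\<^sub>h \<le> B/2\<close>. On a Structure 1/2 run \<open>[a,b]\<close> the box constraints are inactive, so the KKT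
  gradients there are \<open>\<lambda>(s\<^sub>t - s\<^sub>t\<^sub>-\<^sub>1)\<close>; they telescope to \<open>\<lambda>(s\<^sub>b - s\<^sub>a\<^sub>-\<^sub>1)\<close>, a jump of size \<open>2\<lambda>\<close>,
  while each is bounded by \<open>G\<^sub>\<infinity>\<close>. Hence the run, and with it the bin, has at least four
  points, so the bin's path length is at most \<open>B/\<surd>4 = B/2\<close>. The \<open>k\<close>-th coordinate therefore
  stays within \<open>B/2\<close> of the run's value in \<open>(-B,B)\<close> and keeps distance \<open>B/2\<close> from one of the
  two faces of the box.\<close>

lemma key_bin_bounds:
  assumes "key_bin B u n a b" "B \<ge> 0"
  shows "1 \<le> a \<and> a \<le> b \<and> b \<le> n \<and> path_len u a b \<le> B / sqrt (real (b - a + 1))"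
  using assms(1)
proof (induction rule: key_bin.induct)
  have bin_end_bounds: "i0 \<le> bin_end B u n i0 \<and> bin_end B u n i0 \<le> n \<and>
     path_len u i0 (bin_end B u n i0) \<le> B / sqrt (real (bin_end B u n i0 - i0 + 1))"
    if "i0 \<le> n" for i0
  proof -
    let ?P = "\<lambda>i1. i0 \<le> i1 \<and> i1 \<le> n \<and> path_len u i0 i1 \<le> B / sqrt (real (i1 - i0 + 1))"
    have "?P i0" using that assms(2) by (simp add: path_len_def)
    then have "?P (Greatest ?P)" by (intro GreatestI_nat[of ?P i0 n]) auto
    then show ?thesis unfolding bin_end_def by blast
  qed
  {
    case first
    then show ?case using bin_end_bounds[of 1] by auto
  next
    case (step a b)
    then show ?case using bin_end_bounds[of "b+1"] by auto
  }
qed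

lemma path_len_mono:
  assumes "i0 \<le> i" "j \<le> j0"
  shows "path_len u i j \<le> path_len u i0 j0"
  unfolding path_len_def
  by (rule sum_mono2) (use assms in \<open>auto simp: l1norm_def intro: sum_nonneg\<close>)

lemma abs_component_le_l1norm: "\<bar>x $ k\<bar> \<le> l1norm x"
  unfolding l1norm_def by (rule member_le_sum) auto

lemma component_dist_le_path_len:
  assumes "i \<le> j"
  shows "\<bar>u j $ k - u i $ k\<bar> \<le> path_len u i j"
  using assms
proof (induction j rule: dec_induct)
  case base
  then show ?case by (simp add: path_len_def)
next
  case (step m)
  have "path_len u i (Suc m) = path_len u i m + l1norm (u (Suc m) - u m)"
    unfolding path_len_def using step(1) by (simp add: add.commute)
  moreover have "\<bar>u (Suc m) $ k - u m $ k\<bar> \<le> l1norm (u (Suc m) - u m)"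
    using abs_component_le_l1norm[of "u (Suc m) - u m" k] by simp
  ultimately show ?case using step(3) by linarith
qed

lemma key_bin_component_close:
  assumes bin: "key_bin B u n i_s i_t" and "B \<ge> 0" and long: "4 \<le> i_t + 1 - i_s"
    and i: "i \<in> {i_s..i_t}" and j: "j \<in> {i_s..i_t}"
  shows "\<bar>u j $ k - u i $ k\<bar> \<le> B / 2"
proof -
  have bounds: "i_s \<le> i_t" "path_len u i_s i_t \<le> B / sqrt (real (i_t - i_s + 1))"
    using key_bin_bounds[OF assms(1,2)] by auto
  have "2 \<le> sqrt (real (i_t - i_s + 1))"
    using real_sqrt_le_mono[of 4 "real (i_t - i_s + 1)"] long by simp
  then have "B / sqrt (real (i_t - i_s + 1)) \<le> B / 2"
    using \<open>B \<ge> 0\<close> by (intro divide_left_mono) auto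
  then have path: "path_len u i_s i_t \<le> B / 2" using bounds by linarith
  show ?thesis
  proof (cases "i \<le> j")
    case True
    then have "\<bar>u j $ k - u i $ k\<bar> \<le> path_len u i j" by (rule component_dist_le_path_len)
    also have "\<dots> \<le> path_len u i_s i_t" by (rule path_len_mono) (use i j in auto)
    finally show ?thesis using path by linarith
  next
    case False
    then have "\<bar>u i $ k - u j $ k\<bar> \<le> path_len u j i" by (intro component_dist_le_path_len) auto
    also have "\<dots> \<le> path_len u i_s i_t" by (rule path_len_mono) (use i j in auto)
    finally show ?thesis using path by linarith
  qed
qed

lemma gap_min_far_face:
  assumes "a \<le> b" and close: "\<forall>j\<in>{a..b}. \<bar>u j $ k - c\<bar> \<le> B / 2" and "\<bar>c\<bar> \<le> B"
  shows "B / 2 \<le> max (gap_min u (-B) a b k) (gap_min u B a b k)"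
proof -
  have far: "B / 2 \<le> gap_min u \<beta> a b k"
    if "\<And>j. j \<in> {a..b} \<Longrightarrow> B / 2 \<le> \<bar>u j $ k - \<beta>\<bar>" for \<beta>
    unfolding gap_min_def using that \<open>a \<le> b\<close> by (subst Min_ge_iff) auto
  show ?thesis
  proof (cases "c \<ge> 0")
    case True
    have "B / 2 \<le> \<bar>u j $ k - - B\<bar>" if "j \<in> {a..b}" for j
      using close[rule_format, OF that] True \<open>\<bar>c\<bar> \<le> B\<close> by linarith
    then show ?thesis using far by (meson max.coboundedI1 max.coboundedI2 order_trans)
  next
    case False
    have "B / 2 \<le> \<bar>u j $ k - B\<bar>" if "j \<in> {a..b}" for j
      using close[rule_format, OF that] False \<open>\<bar>c\<bar> \<le> B\<close> by linarith
    then show ?thesis using far by (meson max.coboundedI1 max.coboundedI2 order_trans)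
  qed
qed

lemma structure_sign_jump:
  assumes sign: "\<forall>t\<in>{1..<n}. \<forall>k. u (t+1) $ k - u t $ k \<noteq> 0 \<longrightarrow>
                   s t $ k = sgn (u (t+1) $ k - u t $ k)"
    and st: "structure1 n B u k a b \<or> structure2 n B u k a b"
  shows "\<bar>s b $ k - s (a-1) $ k\<bar> = 2"
proof -
  have ab: "2 \<le> a" "a \<le> b" "b \<le> n - 1"
    using st unfolding structure1_def structure2_def by auto
  have b1: "b \<in> {1..<n}" using ab by auto
  have sb: "u (b+1) $ k \<noteq> u b $ k \<Longrightarrow> s b $ k = sgn (u (b+1) $ k - u b $ k)"
    using sign[rule_format, OF b1, of k] by simp
  have a1: "a - 1 \<in> {1..<n}" "a - 1 + 1 = a" using ab by auto
  have sa: "u a $ k \<noteq> u (a-1) $ k \<Longrightarrow> s (a-1) $ k = sgn (u a $ k - u (a-1) $ k)"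
    using sign[rule_format, OF a1(1), of k] unfolding a1(2) by simp
  from st show ?thesis
  proof
    assume "structure1 n B u k a b"
    then have "u (b+1) $ k < u b $ k" "u (a-1) $ k < u a $ k" unfolding structure1_def by blast+
    then have "s b $ k = -1" "s (a-1) $ k = 1" using sa sb by auto
    then show ?thesis by simp
  next
    assume "structure2 n B u k a b"
    then have "u b $ k < u (b+1) $ k" "u a $ k < u (a-1) $ k" unfolding structure2_def by blast+
    then have "s b $ k = 1" "s (a-1) $ k = -1" using sa sb by auto
    then show ?thesis by simp
  qed
qed

lemma kkt_structure_run_length:
  assumes dual: "kkt_dual gradf n B Cn u lam \<gamma>m \<gamma>p"
    and st: "structure1 n B u k a b \<or> structure2 n B u k a b"
    and bound: "\<forall>t\<in>{a..b}. \<bar>gradf t (u t) $ k\<bar> \<le> M"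
  shows "2 * lam \<le> real (b + 1 - a) * M"
proof -
  obtain s where
    sign: "\<forall>t\<in>{1..<n}. \<forall>k. u (t+1) $ k - u t $ k \<noteq> 0 \<longrightarrow> s t $ k = sgn (u (t+1) $ k - u t $ k)"
    and stationary: "\<forall>t\<in>{1..n}. gradf t (u t) = lam *\<^sub>R (s t - s (t-1)) + \<gamma>m t - \<gamma>p t"
    and slack: "\<forall>t\<in>{1..n}. \<forall>k. \<gamma>m t $ k * (u t $ k + B) = 0 \<and> \<gamma>p t $ k * (u t $ k - B) = 0"
    and "lam \<ge> 0"
    using dual unfolding kkt_dual_def by blast
  \<comment> \<open>\<open>blast\<close>, not \<open>auto\<close>: as a rewrite rule the run equation loops at \<open>j = a\<close>.\<close>
  have ab: "2 \<le> a" "a \<le> b" "b \<le> n - 1" and run: "\<forall>j\<in>{a..b}. u j $ k = u a $ k"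
    and interior: "-B < u a $ k" "u a $ k < B"
    using st unfolding structure1_def structure2_def by blast+
  have gradient: "gradf t (u t) $ k = lam * (s t $ k - s (t-1) $ k)" if "t \<in> {a..b}" for t
  proof -
    have t: "t \<in> {1..n}" "u t $ k = u a $ k" using that ab by auto (use run that in blast)
    then have "u t $ k + B \<noteq> 0" "u t $ k - B \<noteq> 0" using interior by auto
    then have "\<gamma>m t $ k = 0" "\<gamma>p t $ k = 0" using slack t(1) by auto
    then show ?thesis using stationary t(1) by simp
  qed
  have "(\<Sum>t=a..b. gradf t (u t) $ k) = (\<Sum>t=a..b. lam * (s t $ k - s (t-1) $ k))"
    by (rule sum.cong) (simp_all only: gradient)
  also have "\<dots> = lam * (\<Sum>t\<in>{Suc (a-1)..b}. s t $ k - s (t-1) $ k)"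
    using ab by (simp add: sum_distrib_left)
  also have "\<dots> = lam * (s b $ k - s (a-1) $ k)"
    using ab by (subst sum_telescope'') auto
  finally have "2 * lam = \<bar>\<Sum>t=a..b. gradf t (u t) $ k\<bar>"
    using structure_sign_jump[OF sign st] \<open>lam \<ge> 0\<close> by (simp add: abs_mult)
  also have "\<dots> \<le> (\<Sum>t=a..b. \<bar>gradf t (u t) $ k\<bar>)" by (rule sum_abs)
  also have "\<dots> \<le> (\<Sum>t=a..b. M)" using bound by (intro sum_mono) auto
  finally show ?thesis by simp
qed

lemma cube_root_le:
  fixes x y z :: real
  assumes "0 < x" "0 < y" "0 \<le> z" "x \<le> y ^ 3 * z"
  shows "x powr (1/3) \<le> y * z powr (1/3)"
proof -
  have "x powr (1/3) \<le> (y ^ 3 * z) powr (1/3)" using assms by (intro powr_mono2) auto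
  also have "\<dots> = (y powr 3) powr (1/3) * z powr (1/3)"
    using assms by (simp add: powr_mult powr_realpow)
  also have "(y powr 3) powr (1/3) = y" using assms by (simp only: powr_powr) simp
  finally show ?thesis .
qed

context
  fixes D K L Ginf B G \<phi> Cn N :: real
  assumes D: "D \<ge> 1" and L: "L \<ge> 1" and Ginf: "Ginf \<ge> 1" and G: "G > 0"
    and K: "K \<ge> B^2 * G^2" and BG: "B^2 * G^2 \<ge> 1" and \<phi>: "\<phi> > 0"
    and Cn: "Cn > 0" and N: "N > 0"
    and Cn_small: "Cn \<le> (B^2 * G^2 * \<phi> / (560 * D * K * Ginf * L))^3 * N"
begin

private definition "Y = B^2 * G^2 * \<phi> / (560 * D * K * Ginf * L)"

private lemma Y_pos: "Y > 0"
  unfolding Y_def using D L Ginf K BG \<phi> by simp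

private lemma Cn_cube_root_le: "Cn powr (1/3) \<le> Y * N powr (1/3)"
  using Cn_small Cn N Y_pos unfolding Y_def[symmetric] by (intro cube_root_le) auto

lemma dual_threshold_ge_twice_grad_bound:
  "2 * Ginf \<le> D * \<phi> * N powr (1/3) / Cn powr (1/3)"
proof -
  have "D * K * L \<ge> 1 * (B^2 * G^2) * 1" by (intro mult_mono) (use D K L BG in auto)
  then have "2 * Ginf * Y \<le> \<phi> / 280"
    unfolding Y_def using Ginf \<phi> BG by (simp add: field_simps)
  also have "\<dots> \<le> D * \<phi>" using D \<phi> by simp
  finally have "2 * Ginf * Y \<le> D * \<phi>" .
  then have "2 * Ginf \<le> D * \<phi> / Y" using Y_pos by (simp add: field_simps)
  also have "\<dots> = D * \<phi> * N powr (1/3) / (Y * N powr (1/3))" using N by simp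
  also have "\<dots> \<le> D * \<phi> * N powr (1/3) / Cn powr (1/3)"
    using Cn_cube_root_le Cn D \<phi> N Y_pos by (intro divide_left_mono) auto
  finally show ?thesis .
qed

lemma gap_threshold_sq_le:
  "140 * D * K * Ginf * Cn powr (1/3) * L / (G^2 * \<phi> * N powr (1/3)) \<le> B^2 / 4"
proof -
  have "140 * D * K * Ginf * Cn powr (1/3) * L / (G^2 * \<phi> * N powr (1/3))
      \<le> 140 * D * K * Ginf * (Y * N powr (1/3)) * L / (G^2 * \<phi> * N powr (1/3))"
    using Cn_cube_root_le D K BG Ginf L G \<phi> N
    by (intro divide_right_mono mult_right_mono mult_left_mono) auto
  also have "\<dots> = B^2 / 4"
    unfolding Y_def using D K BG Ginf L G \<phi> N by (simp add: field_simps)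
  finally show ?thesis .
qed

end

lemma small_budget_thresholds:
  fixes B G Ginf \<alpha> Cn :: real and n d :: nat
  defines "K \<equiv> 8*G^2*B^2*\<alpha> + G^2*B^2 + 1/\<alpha>"
  defines "\<phi> \<equiv> sqrt (70 * K)"
  assumes B: "B \<ge> 1" and "G \<ge> 1" and Ginf: "Ginf \<ge> 1" and "\<alpha> > 0" and Cn: "Cn > 0"
    and "n \<ge> 3" and "d \<ge> 1"
    and Cn_small: "Cn \<le> (B^2 * G^2 * \<phi> / (560 * real d powr 1.5 * K * Ginf * ln (real n)))^3 * real n"
  shows "2 * Ginf \<le> real d powr 1.5 * \<phi> * real n powr (1/3) / Cn powr (1/3)"
    and "sqrt (140 * real d powr 1.5 * K * Ginf * Cn powr (1/3) * ln (real n)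
               / (G^2 * \<phi> * real n powr (1/3))) \<le> B / 2"
proof -
  have "1 \<le> B^2" "1 \<le> G^2" using B \<open>G \<ge> 1\<close> by (simp_all add: one_le_power)
  then have "1 * 1 \<le> B^2 * G^2" by (intro mult_mono) auto
  then have BG: "B^2 * G^2 \<ge> 1" by simp
  have "0 \<le> 8*G^2*B^2*\<alpha>" "0 \<le> 1/\<alpha>" "G^2*B^2 = B^2*G^2" using \<open>\<alpha> > 0\<close> by simp_all
  then have K: "K \<ge> B^2 * G^2" unfolding K_def by linarith
  have "exp 1 \<le> real n" using exp_le \<open>n \<ge> 3\<close> by linarith
  then have L: "ln (real n) \<ge> 1" using ln_le_cancel_iff[of "exp 1" "real n"] \<open>n \<ge> 3\<close> by simp
  have D: "real d powr 1.5 \<ge> 1" using \<open>d \<ge> 1\<close> by (intro ge_one_powr_ge_zero) auto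
  have \<phi>: "\<phi> > 0" unfolding \<phi>_def using K BG by (intro real_sqrt_gt_zero mult_pos_pos) linarith+
  have N: "real n > 0" using \<open>n \<ge> 3\<close> by simp
  have G: "G > 0" using \<open>G \<ge> 1\<close> by simp
  note params = D L Ginf G K BG \<phi> Cn N Cn_small
  show "2 * Ginf \<le> real d powr 1.5 * \<phi> * real n powr (1/3) / Cn powr (1/3)"
    by (rule dual_threshold_ge_twice_grad_bound[OF params])
  have "sqrt (140 * real d powr 1.5 * K * Ginf * Cn powr (1/3) * ln (real n)
               / (G^2 * \<phi> * real n powr (1/3))) \<le> sqrt (B^2 / 4)"
    using gap_threshold_sq_le[OF params] by (rule real_sqrt_le_mono)
  also have "sqrt (B^2 / 4) = B / 2" using B by (simp add: real_sqrt_divide)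
  finally show "sqrt (140 * real d powr 1.5 * K * Ginf * Cn powr (1/3) * ln (real n)
               / (G^2 * \<phi> * real n powr (1/3))) \<le> B / 2" .
qed

theorem mainTheorem16:
  fixes n :: nat and B G Ginf \<alpha> Cn lam :: real
    and g xt :: "nat \<Rightarrow> real^'d"
    and f :: "nat \<Rightarrow> real^'d \<Rightarrow> real"
    and gradf :: "nat \<Rightarrow> real^'d \<Rightarrow> real^'d"
    and u \<gamma>m \<gamma>p :: "nat \<Rightarrow> real^'d"
    and i_s i_t :: nat and k :: 'd
  defines "f \<equiv> (\<lambda>t. surrogate \<alpha> (g t) (xt t))"
  defines "\<phi> \<equiv> sqrt (70 * (8*G^2*B^2*\<alpha> + G^2*B^2 + 1/\<alpha>))"
  defines "\<mu>th \<equiv> sqrt ((140 * real CARD('d) powr 1.5 * (8*G^2*B^2*\<alpha> + G^2*B^2 + 1/\<alpha>)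
                        * Ginf * Cn powr (1/3) * ln (real n))
                       / (G^2 * \<phi> * real n powr (1/3)))"
  assumes xt_in: "\<forall>t\<in>{1..n}. xt t \<in> box_D B"
    and grad: "\<forall>t\<in>{1..n}. \<forall>x. (f t has_derivative (\<lambda>h. gradf t x \<bullet> h)) (at x)"
    and grad_bound: "\<forall>t\<in>{1..n}. \<forall>x\<in>box_D B. \<forall>j. \<bar>gradf t x $ j\<bar> \<le> Ginf"
    and G_pos: "G > 0"
    and min_ge1: "min G (min Ginf B) \<ge> 1"
    and alpha_pos: "\<alpha> > 0"
    and Cn_pos: "Cn > 0"
    and opt: "offline_optimal f n B Cn u"
    and dual: "kkt_dual gradf n B Cn u lam \<gamma>m \<gamma>p"
    and lam_ge: "lam \<ge> real CARD('d) powr 1.5 * \<phi> * real n powr (1/3) / Cn powr (1/3)"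
    and bin: "key_bin B u n i_s i_t"
    and struct: "\<exists>a b. i_s \<le> a \<and> b \<le> i_t \<and> (structure1 n B u k a b \<or> structure2 n B u k a b)"
    and Cn_small: "Cn \<le> ((B^2 * G^2 * \<phi>) / (560 * real CARD('d) powr 1.5
                        * (8*G^2*B^2*\<alpha> + G^2*B^2 + 1/\<alpha>) * Ginf * ln (real n)))^3 * real n"
  shows "max (gap_min u (-B) i_s i_t k) (gap_min u B i_s i_t k) \<ge> \<mu>th"
proof -
  obtain a b where ab: "i_s \<le> a" "b \<le> i_t" and st: "structure1 n B u k a b \<or> structure2 n B u k a b"
    using struct by blast
  have run: "2 \<le> a" "a \<le> b" "b \<le> n - 1" "-B < u a $ k" "u a $ k < B"
    using st unfolding structure1_def structure2_def by blast+
  have B: "B \<ge> 1" and Ginf: "Ginf \<ge> 1" and "G \<ge> 1" using min_ge1 by auto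
  have "3 \<le> n" "1 \<le> CARD('d)" using run by simp_all
  note thresholds = small_budget_thresholds[OF B \<open>G \<ge> 1\<close> Ginf alpha_pos Cn_pos this,
      folded \<phi>_def, OF Cn_small]
  have \<mu>th: "\<mu>th \<le> B / 2" unfolding \<mu>th_def using thresholds(2) .
  have "2 * Ginf \<le> lam" using thresholds(1) lam_ge by linarith
  moreover have "2 * lam \<le> real (b + 1 - a) * Ginf"
  proof (rule kkt_structure_run_length[OF dual st])
    have "\<forall>t\<in>{1..n}. u t \<in> box_D B" using opt unfolding offline_optimal_def feasible_def by blast
    moreover have "{a..b} \<subseteq> {1..n}" using run by auto
    ultimately show "\<forall>t\<in>{a..b}. \<bar>gradf t (u t) $ k\<bar> \<le> Ginf" using grad_bound by blast
  qed
  ultimately have "4 * Ginf \<le> real (b + 1 - a) * Ginf" by linarith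
  then have "4 \<le> b + 1 - a" using Ginf by simp
  then have "\<forall>j\<in>{i_s..i_t}. \<bar>u j $ k - u a $ k\<bar> \<le> B / 2"
    using key_bin_component_close[OF bin] B ab run by auto
  then have "B / 2 \<le> max (gap_min u (-B) i_s i_t k) (gap_min u B i_s i_t k)"
    using gap_min_far_face[of i_s i_t u k "u a $ k" B] run ab by fastforce
  then show ?thesis using \<mu>th by linarith
qed

end
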